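(* For each integer $L\ge 2$ there is an irrational number $x=[a_0,a_1,a_2,\ldots]$ with all $a_i\in\{1,2,3,4\}$ and periodic sequence of partial quotients, such that its Jacobi sequence is periodic with repeating block $1,1,\ldots,1,*$ of length $L$ (the value $1$ repeated $L-1$ times followed by $*$).
   Context: For $x\in\mathbb{R}\setminus\mathbb{Q}$ with regular continued fraction expansion $x=[a_0,a_1,a_2,\ldots]$, the convergents $s_k/t_k$ are defined by $s_{-1}=1$, $s_0=a_0$, $s_k=a_ks_{k-1}+s_{k-2}$ and $t_{-1}=0$, $t_0=1$, $t_k=a_kt_{k-1}+t_{k-2}$ for $k\ge1$. For an odd natural number $n$ and an integer $m$ coprime to $n$, $\left(\frac{m}{n}\right)$ is the usual Jacobi symbol (equal to $1$ if $n=1$); if $n$ is even and $\gcd(m,n)=1$, one sets $\left(\frac{m}{n}\right)=*$, a fixed symbol different from $\pm1$. The Jacobi sequence of $x$ is $\left(\frac{s_k}{t_k}\right)$, $k\ge 0$. *)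

theory Defs
  imports Complex_Main "HOL-Number_Theory.Number_Theory"
begin

(* Convergent numerators/denominators: cf_st a k = (s_k, t_k), k >= 0,
   with s_{-1}=1, t_{-1}=0, s_0=a_0, t_0=1, s_k = a_k s_{k-1} + s_{k-2}. *)
fun cf_st :: "(nat \<Rightarrow> int) \<Rightarrow> nat \<Rightarrow> int \<times> int" where
  "cf_st a 0 = (a 0, 1)"
| "cf_st a (Suc 0) = (a 1 * a 0 + 1, a 1)"
| "cf_st a (Suc (Suc k)) =
     (a (Suc (Suc k)) * fst (cf_st a (Suc k)) + fst (cf_st a k),
      a (Suc (Suc k)) * snd (cf_st a (Suc k)) + snd (cf_st a k))"

definition cf_s :: "(nat \<Rightarrow> int) \<Rightarrow> nat \<Rightarrow> int" where
  "cf_s a k = fst (cf_st a k)"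

definition cf_t :: "(nat \<Rightarrow> int) \<Rightarrow> nat \<Rightarrow> int" where
  "cf_t a k = snd (cf_st a k)"

definition is_cf_expansion :: "real \<Rightarrow> (nat \<Rightarrow> int) \<Rightarrow> bool" where
  "is_cf_expansion x a \<longleftrightarrow> (\<forall>i\<ge>1. a i \<ge> 1) \<and>
     (\<lambda>k. real_of_int (cf_s a k) / real_of_int (cf_t a k)) \<longlonglongrightarrow> x"

definition Jacobi :: "int \<Rightarrow> int \<Rightarrow> int" where
  "Jacobi m n = (\<Prod>p\<in>prime_factors n. Legendre m p ^ multiplicity p n)"

datatype jac_val = JVal int | JStar

definition jacobi_symb :: "int \<Rightarrow> int \<Rightarrow> jac_val" where
  "jacobi_symb m n = (if even n then JStar else JVal (Jacobi m n))"

definition jacobi_seq :: "(nat \<Rightarrow> int) \<Rightarrow> nat \<Rightarrow> jac_val" where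
  "jacobi_seq a k = jacobi_symb (cf_s a k) (cf_t a k)"

end

theory Submission
  imports Defs
begin

(*
  Take the L-periodic partial quotients 4, 1, 4, ..., 4, 3 (all equal to 4 when L = 2).
  Modulo 4 the denominators t(k) then repeat the block 1, ..., 1, 0, so t(k) is even exactly
  at the ends of the periods. The symbols (t(k) / t(k+1)) are evaluated by a Euclidean descent:
  if t(k) = t(k+1) = 1 (mod 4), reciprocity and t(k+1) = t(k-1) (mod t(k)) reduce the symbol to
  (t(k-2) / t(k-1)); at a period end t(k+1) = t(k-1) + 4 t(k) with 4 | t(k), and reciprocity
  together with (-1 / n) = 1 for n = 1 (mod 4) reduce it to (t(k) / t(k-1)). Hence
  (t(k) / t(k+1)) = 1 whenever t(k+1) is odd, and s(k) t(k-1) = +-1 (mod t(k)) turns this into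
  (s(k) / t(k)) = 1. The limit is irrational because 0 < |x - s(k)/t(k)| < 1/(t(k) t(k+1))
  and t(k) >= k.
*)

section \<open>Legendre and Jacobi symbols\<close>

lemma Legendre_cong:
  assumes "[a = b] (mod p)"
  shows "Legendre a p = Legendre b p"
proof -
  have "[a = 0] (mod p) \<longleftrightarrow> [b = 0] (mod p)"
    using assms by (meson cong_sym cong_trans)
  moreover have "QuadRes p a \<longleftrightarrow> QuadRes p b"
    unfolding QuadRes_def using assms by (meson cong_sym cong_trans)
  ultimately show ?thesis unfolding Legendre_def by simp
qed

lemma Legendre_values: "Legendre a p \<in> {-1, 0, 1}"
  unfolding Legendre_def by auto

lemma Legendre_one: "prime p \<Longrightarrow> Legendre 1 p = 1"
  unfolding Legendre_def QuadRes_def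
  by (metis cong_0_iff cong_refl not_prime_unit one_dvd power_one)

lemma Legendre_square_eq_one:
  assumes "\<not> p dvd a"
  shows "Legendre a p ^ 2 = 1"
  using assms unfolding Legendre_def by (auto simp: cong_0_iff)

lemma cong_values_eq:
  fixes x y p :: int
  assumes "x \<in> {-1, 0, 1}" "y \<in> {-1, 0, 1}" "p > 2" "[x = y] (mod p)"
  shows "x = y"
proof (rule ccontr)
  assume "x \<noteq> y"
  moreover have "p dvd \<bar>x - y\<bar>" using assms(4) by (simp add: cong_iff_dvd_diff)
  ultimately have "p \<le> \<bar>x - y\<bar>" using zdvd_imp_le by fastforce
  moreover have "\<bar>x - y\<bar> \<le> 2" using assms(1,2) by auto
  ultimately show False using assms(3) by linarith
qed

lemma odd_prime_gt_2_int: "prime (p::int) \<Longrightarrow> odd p \<Longrightarrow> p > 2"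
  using prime_ge_2_int[of p] by (cases "p = 2") auto

lemma euler_criterion_int:
  assumes "prime (q::int)" "q > 2"
  shows "[Legendre a q = a ^ nat ((q - 1) div 2)] (mod q)"
proof -
  have "prime (nat q)" "2 < nat q" "int (nat q) = q" using assms by auto
  moreover have "(nat q - 1) div 2 = nat ((q - 1) div 2)"
    using assms by (simp add: nat_div_distrib nat_diff_distrib)
  ultimately show ?thesis using euler_criterion[of "nat q" a] by simp
qed

lemma Legendre_mult:
  assumes "prime p" "p > 2"
  shows "Legendre (a * b) p = Legendre a p * Legendre b p"
proof -
  let ?e = "nat ((p - 1) div 2)"
  have "[Legendre (a * b) p = a ^ ?e * b ^ ?e] (mod p)"
    using euler_criterion_int[OF assms, of "a * b"] by (simp add: power_mult_distrib)
  moreover have "[Legendre a p * Legendre b p = a ^ ?e * b ^ ?e] (mod p)"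
    using euler_criterion_int[OF assms] by (blast intro: cong_mult)
  ultimately have "[Legendre (a * b) p = Legendre a p * Legendre b p] (mod p)"
    by (metis cong_sym cong_trans)
  moreover have "Legendre a p * Legendre b p \<in> {-1, 0, 1}"
    using Legendre_values[of a p] Legendre_values[of b p] by auto
  ultimately show ?thesis using cong_values_eq Legendre_values assms(2) by blast
qed

definition chi4 :: "int \<Rightarrow> int" where
  "chi4 n = (if n mod 4 = 1 then 1 else -1)"

lemma chi4_mult:
  assumes "odd m" "odd n"
  shows "chi4 (m * n) = chi4 m * chi4 n"
proof -
  have "m mod 4 = 1 \<or> m mod 4 = 3" using assms(1) by presburger
  moreover have "n mod 4 = 1 \<or> n mod 4 = 3" using assms(2) by presburger
  moreover have "(m * n) mod 4 = (m mod 4) * (n mod 4) mod 4" by (simp add: mod_mult_eq)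
  ultimately show ?thesis unfolding chi4_def by (elim disjE) simp_all
qed

lemma Legendre_minus_one:
  assumes "prime p" "p > 2"
  shows "Legendre (-1) p = chi4 p"
proof -
  have "odd p" using assms by (simp add: prime_odd_int)
  then have "p mod 4 = 1 \<longleftrightarrow> even ((p - 1) div 2)" by presburger
  moreover have "(p - 1) div 2 \<ge> 0" using assms(2) by simp
  ultimately have "(-1::int) ^ nat ((p - 1) div 2) = chi4 p"
    by (simp add: chi4_def minus_one_power_iff even_nat_iff)
  then have "[Legendre (-1) p = chi4 p] (mod p)"
    using euler_criterion_int[OF assms, of "-1"] by simp
  moreover have "chi4 p \<in> {-1, 0, 1}" by (simp add: chi4_def)
  ultimately show ?thesis using cong_values_eq Legendre_values assms(2) by blast
qed

lemma pos_int_prime_induct [consumes 1, case_names one factor]: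
  fixes n :: int
  assumes "n > 0" "P 1" "\<And>p m. prime p \<Longrightarrow> m > 0 \<Longrightarrow> P m \<Longrightarrow> P (p * m)"
  shows "P n"
proof -
  have "n > 0 \<longrightarrow> P n"
  proof (induction n rule: prime_divisors_induct)
    case (unit x)
    then show ?case using assms(2) by (auto simp: zdvd1_eq)
  next
    case (factor p x)
    then show ?case
      using assms(3) prime_gt_0_int[of p] by (auto simp: zero_less_mult_iff)
  qed simp
  with assms(1) show ?thesis by blast
qed

lemma Jacobi_eq_prod_mset:
  "Jacobi a n = prod_mset (image_mset (Legendre a) (prime_factorization n))"
  unfolding Jacobi_def image_prod_mset_multiplicity
  by (rule prod.cong) (auto simp: count_prime_factorization_prime in_prime_factors_imp_prime)

lemma Jacobi_one_right [simp]: "Jacobi a 1 = 1"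
  by (simp add: Jacobi_eq_prod_mset)

lemma Jacobi_prime: "prime p \<Longrightarrow> Jacobi a p = Legendre a p"
  by (simp add: Jacobi_eq_prod_mset prime_factorization_prime)

lemma Jacobi_mult_right:
  "m \<noteq> 0 \<Longrightarrow> n \<noteq> 0 \<Longrightarrow> Jacobi a (m * n) = Jacobi a m * Jacobi a n"
  by (simp add: Jacobi_eq_prod_mset prime_factorization_mult)

lemma prime_factor_of_odd_gt_2:
  assumes "p \<in> prime_factors (n::int)" "odd n"
  shows "p > 2"
proof -
  have "prime p" "odd p" using assms by (auto dest: in_prime_factors_imp_dvd dvd_trans)
  then show ?thesis by (rule odd_prime_gt_2_int)
qed

lemma Jacobi_mult_left:
  assumes "odd n"
  shows "Jacobi (a * b) n = Jacobi a n * Jacobi b n"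
  unfolding Jacobi_def prod.distrib[symmetric] power_mult_distrib[symmetric]
  by (rule prod.cong)
    (auto simp: Legendre_mult in_prime_factors_imp_prime prime_factor_of_odd_gt_2[OF _ assms])

lemma Jacobi_cong:
  assumes "[a = b] (mod n)"
  shows "Jacobi a n = Jacobi b n"
  unfolding Jacobi_def
proof (rule prod.cong[OF refl])
  fix p assume "p \<in> prime_factors n"
  then have "[a = b] (mod p)"
    using assms cong_dvd_modulus in_prime_factors_imp_dvd by blast
  then show "Legendre a p ^ multiplicity p n = Legendre b p ^ multiplicity p n"
    by (simp add: Legendre_cong)
qed

lemma Jacobi_one_left [simp]: "Jacobi 1 n = 1"
  unfolding Jacobi_def
  by (rule prod.neutral) (auto simp: Legendre_one in_prime_factors_imp_prime)

lemma Jacobi_square_eq_one: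
  assumes "coprime a n"
  shows "Jacobi a n ^ 2 = 1"
  unfolding Jacobi_def prod_power_distrib
proof (rule prod.neutral, safe)
  fix p assume p: "p \<in> prime_factors n"
  then have "\<not> p dvd a"
    using assms by (metis coprime_common_divisor in_prime_factors_iff not_prime_unit)
  then have "(Legendre a p ^ 2) ^ multiplicity p n = 1" by (simp add: Legendre_square_eq_one)
  then show "(Legendre a p ^ multiplicity p n) ^ 2 = 1" by (metis power_mult mult.commute)
qed

lemma Jacobi_minus_one:
  assumes "n > 0" "odd n"
  shows "Jacobi (-1) n = chi4 n"
proof -
  have "odd n \<longrightarrow> Jacobi (-1) n = chi4 n"
    using assms(1)
  proof (induction n rule: pos_int_prime_induct)
    case one
    show ?case by (simp add: chi4_def)
  next
    case (factor p m)
    show ?case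
    proof
      assume "odd (p * m)"
      then have "odd p" "odd m" by auto
      then have "p > 2" using factor.hyps(1) by (simp add: odd_prime_gt_2_int)
      have "Jacobi (-1) (p * m) = Jacobi (-1) p * Jacobi (-1) m"
        using factor.hyps by (intro Jacobi_mult_right) auto
      also have "\<dots> = chi4 p * chi4 m"
        using factor \<open>odd m\<close> \<open>p > 2\<close> by (simp add: Jacobi_prime Legendre_minus_one)
      also have "\<dots> = chi4 (p * m)" using chi4_mult \<open>odd p\<close> \<open>odd m\<close> by simp
      finally show "Jacobi (-1) (p * m) = chi4 (p * m)" .
    qed
  qed
  with assms(2) show ?thesis by blast
qed

lemma chi4_cases: "chi4 n = 1 \<or> chi4 n = -1"
  by (simp add: chi4_def)

definition reciprocity_sign :: "int \<Rightarrow> int \<Rightarrow> int" where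
  "reciprocity_sign m n = (if chi4 m = -1 \<and> chi4 n = -1 then -1 else 1)"

lemma reciprocity_sign_commute: "reciprocity_sign m n = reciprocity_sign n m"
  unfolding reciprocity_sign_def by auto

lemma reciprocity_sign_one [simp]: "reciprocity_sign 1 n = 1"
  unfolding reciprocity_sign_def chi4_def by simp

lemma reciprocity_sign_mult:
  assumes "odd a" "odd b"
  shows "reciprocity_sign (a * b) c = reciprocity_sign a c * reciprocity_sign b c"
  using chi4_mult[OF assms] chi4_cases[of a] chi4_cases[of b] chi4_cases[of c]
  unfolding reciprocity_sign_def by auto

lemma Legendre_reciprocity:
  assumes "prime p" "prime q" "p > 2" "q > 2" "p \<noteq> q"
  shows "Legendre p q * Legendre q p = reciprocity_sign p q"
proof -
  have "odd p" "odd q" using assms by (simp_all add: prime_odd_int)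
  then have "p mod 4 = 1 \<longleftrightarrow> even ((p - 1) div 2)" "q mod 4 = 1 \<longleftrightarrow> even ((q - 1) div 2)"
    by presburger+
  moreover have "(p - 1) div 2 \<ge> 0" "(q - 1) div 2 \<ge> 0" using assms by simp_all
  moreover have "(-1::int) ^ nat ((p - 1) div 2 * ((q - 1) div 2)) =
      (if even ((p - 1) div 2) \<or> even ((q - 1) div 2) then 1 else -1)"
    using calculation(3,4) by (simp add: minus_one_power_iff even_nat_iff)
  ultimately have "(-1::int) ^ nat ((p - 1) div 2 * ((q - 1) div 2)) = reciprocity_sign p q"
    unfolding reciprocity_sign_def chi4_def by auto
  then show ?thesis using Quadratic_Reciprocity_int[of p q] assms by simp
qed

lemma Jacobi_reciprocity_prime:
  assumes q: "prime q" "q > 2" and m: "m > 0" "odd m" "coprime m q"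
  shows "Jacobi m q * Jacobi q m = reciprocity_sign m q"
proof -
  have "odd m \<longrightarrow> coprime m q \<longrightarrow> Jacobi m q * Jacobi q m = reciprocity_sign m q"
    using m(1)
  proof (induction m rule: pos_int_prime_induct)
    case one
    show ?case by simp
  next
    case (factor p m)
    show ?case
    proof (intro impI)
      assume "odd (p * m)" "coprime (p * m) q"
      then have odd: "odd p" "odd m" and coprime: "coprime p q" "coprime m q" by auto
      then have "p > 2" using factor.hyps(1) by (simp add: odd_prime_gt_2_int)
      have "p \<noteq> q" using coprime(1) factor.hyps(1) by (metis coprime_self not_prime_unit)
      have "Jacobi (p * m) q * Jacobi q (p * m)
            = (Legendre p q * Legendre q p) * (Jacobi m q * Jacobi q m)"
        using Jacobi_mult_left[of q] Jacobi_mult_right[of p m] factor.hyps q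
        by (simp add: Jacobi_prime prime_odd_int)
      also have "\<dots> = reciprocity_sign p q * reciprocity_sign m q"
        using Legendre_reciprocity[OF factor.hyps(1) q(1) \<open>p > 2\<close> q(2) \<open>p \<noteq> q\<close>]
          factor.IH odd coprime by simp
      also have "\<dots> = reciprocity_sign (p * m) q" using reciprocity_sign_mult odd by simp
      finally show "Jacobi (p * m) q * Jacobi q (p * m) = reciprocity_sign (p * m) q" .
    qed
  qed
  with m show ?thesis by blast
qed

lemma Jacobi_reciprocity:
  assumes "m > 0" "odd m" "n > 0" "odd n" "coprime m n"
  shows "Jacobi m n * Jacobi n m = reciprocity_sign m n"
proof -
  have "odd n \<longrightarrow> coprime m n \<longrightarrow> Jacobi m n * Jacobi n m = reciprocity_sign m n"
    using assms(3)
  proof (induction n rule: pos_int_prime_induct)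
    case one
    show ?case by (simp add: reciprocity_sign_commute[of m 1])
  next
    case (factor q n)
    show ?case
    proof (intro impI)
      assume "odd (q * n)" "coprime m (q * n)"
      then have odd: "odd q" "odd n" and coprime: "coprime m q" "coprime m n" by auto
      then have "q > 2" using factor.hyps(1) by (simp add: odd_prime_gt_2_int)
      have "Jacobi m (q * n) * Jacobi (q * n) m
            = (Jacobi m q * Jacobi q m) * (Jacobi m n * Jacobi n m)"
        using Jacobi_mult_left[OF assms(2)] Jacobi_mult_right[of q n] factor.hyps by simp
      also have "\<dots> = reciprocity_sign m q * reciprocity_sign m n"
        using Jacobi_reciprocity_prime[OF factor.hyps(1) \<open>q > 2\<close> assms(1,2) coprime(1)]
          factor.IH odd coprime by simp
      also have "\<dots> = reciprocity_sign m (q * n)"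
        using reciprocity_sign_mult[OF odd, of m] by (simp add: reciprocity_sign_commute[of m])
      finally show "Jacobi m (q * n) * Jacobi (q * n) m = reciprocity_sign m (q * n)" .
    qed
  qed
  with assms show ?thesis by blast
qed

lemma Jacobi_swap_one_mod_4:
  assumes "m > 0" "n > 0" "m mod 4 = 1" "n mod 4 = 1" "coprime m n"
  shows "Jacobi m n = Jacobi n m"
proof -
  have "odd m" "odd n" using assms(3,4) by presburger+
  moreover have "reciprocity_sign m n = 1"
    unfolding reciprocity_sign_def chi4_def using assms(3) by simp
  ultimately have "Jacobi m n * Jacobi n m = 1"
    using Jacobi_reciprocity assms(1,2,5) by simp
  moreover have "Jacobi n m ^ 2 = 1"
    using Jacobi_square_eq_one assms(5) by (simp add: coprime_commute)
  ultimately show ?thesis by (metis mult.assoc mult_1_right power2_eq_square)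
qed

text \<open>
  With \<open>N = n + m\<close>, the step is \<open>(m/N) = (-n/N) = (n/N) = (N/n) = (m/n)\<close>;
  the hypotheses mod 4 make both the supplementary law and reciprocity sign-free.
\<close>

lemma Jacobi_add_left:
  assumes "m > 0" "n > 0" "m mod 4 = 0" "n mod 4 = 1" "coprime m n"
  shows "Jacobi m (n + m) = Jacobi m n"
proof -
  define N where "N = n + m"
  have N: "N > 0" "N mod 4 = 1" "odd N" using assms unfolding N_def by presburger+
  have "gcd n N = gcd n m" by (simp add: N_def)
  then have "coprime n N" using assms(5) by (metis coprime_iff_gcd_eq_1 gcd.commute)
  have "[m = -1 * n] (mod N)" unfolding N_def by (simp add: cong_iff_dvd_diff add.commute)
  then have "Jacobi m N = Jacobi (-1 * n) N" by (rule Jacobi_cong)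
  also have "\<dots> = Jacobi (-1) N * Jacobi n N" using Jacobi_mult_left N(3) by blast
  also have "\<dots> = Jacobi n N" using Jacobi_minus_one N by (simp add: chi4_def)
  also have "\<dots> = Jacobi N n"
    using Jacobi_swap_one_mod_4 \<open>coprime n N\<close> assms N by blast
  also have "\<dots> = Jacobi m n"
    by (rule Jacobi_cong) (simp add: N_def cong_iff_dvd_diff)
  finally show ?thesis unfolding N_def .
qed

lemma Jacobi_add_multiple_left:
  assumes "m > 0" "n > 0" "m mod 4 = 0" "n mod 4 = 1" "coprime m n"
  shows "Jacobi m (n + int c * m) = Jacobi m n"
proof (induction c)
  case (Suc c)
  have "gcd m (n + int c * m) = gcd m n"
    using gcd_add_mult[of m "int c" n] by (simp add: add.commute)
  then have "coprime m (n + int c * m)" using assms(5) by (simp add: coprime_iff_gcd_eq_1)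
  moreover have "(n + int c * m) mod 4 = 1"
    using assms(3,4) by (simp add: mod_add_eq[symmetric] mod_mult_right_eq[symmetric])
  moreover have "n + int c * m > 0" using assms(1,2) by (simp add: add_pos_nonneg)
  ultimately have "Jacobi m ((n + int c * m) + m) = Jacobi m (n + int c * m)"
    using assms(1,3) by (intro Jacobi_add_left)
  also have "\<dots> = Jacobi m n" by (rule Suc.IH)
  finally show ?case by (simp add: algebra_simps)
qed simp

section \<open>Continuants\<close>

lemma cf_s_0 [simp]: "cf_s a 0 = a 0"
  and cf_t_0 [simp]: "cf_t a 0 = 1"
  and cf_s_1 [simp]: "cf_s a (Suc 0) = a 1 * a 0 + 1"
  and cf_t_1 [simp]: "cf_t a (Suc 0) = a 1"
  and cf_s_Suc_Suc: "cf_s a (Suc (Suc k)) = a (Suc (Suc k)) * cf_s a (Suc k) + cf_s a k"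
  and cf_t_Suc_Suc: "cf_t a (Suc (Suc k)) = a (Suc (Suc k)) * cf_t a (Suc k) + cf_t a k"
  by (simp_all add: cf_s_def cf_t_def)

lemma cf_det: "cf_s a (Suc k) * cf_t a k - cf_s a k * cf_t a (Suc k) = (-1) ^ k"
proof (induction k)
  case (Suc k)
  have "cf_s a (Suc (Suc k)) * cf_t a (Suc k) - cf_s a (Suc k) * cf_t a (Suc (Suc k))
        = - (cf_s a (Suc k) * cf_t a k - cf_s a k * cf_t a (Suc k))"
    by (simp add: cf_s_Suc_Suc cf_t_Suc_Suc algebra_simps)
  then show ?case using Suc by simp
qed simp

lemma cf_det_Suc_Suc:
  "cf_s a (Suc (Suc k)) * cf_t a k - cf_s a k * cf_t a (Suc (Suc k)) = a (Suc (Suc k)) * (-1) ^ k"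
proof -
  have "cf_s a (Suc (Suc k)) * cf_t a k - cf_s a k * cf_t a (Suc (Suc k))
        = a (Suc (Suc k)) * (cf_s a (Suc k) * cf_t a k - cf_s a k * cf_t a (Suc k))"
    by (simp add: cf_s_Suc_Suc cf_t_Suc_Suc algebra_simps)
  then show ?thesis by (simp add: cf_det)
qed

lemma coprime_cf_t_Suc: "coprime (cf_t a k) (cf_t a (Suc k))"
proof (rule coprimeI)
  fix c assume "c dvd cf_t a k" "c dvd cf_t a (Suc k)"
  then have "c dvd cf_s a (Suc k) * cf_t a k - cf_s a k * cf_t a (Suc k)" by simp
  then have "c dvd (-1) ^ k" by (simp only: cf_det)
  moreover have "is_unit ((-1::int) ^ k)" by simp
  ultimately show "is_unit c" by (rule dvd_unit_imp_unit)
qed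

lemma cf_t_Suc_Suc_cong: "[cf_t a (Suc (Suc k)) = cf_t a k] (mod cf_t a (Suc k))"
  by (simp add: cf_t_Suc_Suc cong_iff_dvd_diff)

lemma cf_s_Suc_mult_cf_t_cong: "[cf_s a (Suc k) * cf_t a k = (-1) ^ k] (mod cf_t a (Suc k))"
proof -
  have "cf_s a (Suc k) * cf_t a k - (-1) ^ k = cf_s a k * cf_t a (Suc k)"
    using cf_det[of a k] by linarith
  then show ?thesis by (simp add: cong_iff_dvd_diff)
qed

lemma Jacobi_cf_s_Suc:
  assumes "cf_t a (Suc k) > 0" "cf_t a (Suc k) mod 4 = 1"
  shows "Jacobi (cf_s a (Suc k)) (cf_t a (Suc k)) = Jacobi (cf_t a k) (cf_t a (Suc k))"
proof -
  let ?s = "cf_s a (Suc k)" and ?t = "cf_t a k" and ?t' = "cf_t a (Suc k)"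
  have "odd ?t'" using assms(2) by presburger
  have "Jacobi ?s ?t' * Jacobi ?t ?t' = Jacobi ((-1) ^ k) ?t'"
    using Jacobi_mult_left[OF \<open>odd ?t'\<close>] Jacobi_cong[OF cf_s_Suc_mult_cf_t_cong] by metis
  also have "\<dots> = 1"
    using Jacobi_minus_one[OF assms(1) \<open>odd ?t'\<close>] assms(2)
    by (cases "even k") (simp_all add: chi4_def)
  finally have "Jacobi ?s ?t' * Jacobi ?t ?t' = 1" .
  moreover have "Jacobi ?t ?t' ^ 2 = 1" by (rule Jacobi_square_eq_one[OF coprime_cf_t_Suc])
  ultimately show ?thesis by (metis mult.assoc mult_1_right power2_eq_square)
qed

definition cf_conv :: "(nat \<Rightarrow> int) \<Rightarrow> nat \<Rightarrow> real" where
  "cf_conv a k = real_of_int (cf_s a k) / real_of_int (cf_t a k)"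

context
  fixes a :: "nat \<Rightarrow> int"
  assumes partial_quotients_pos: "\<And>i. i \<ge> 1 \<Longrightarrow> a i \<ge> 1"
begin

lemma cf_t_pos: "cf_t a k \<ge> 1"
proof (induction k rule: induct_nat_012)
  case (ge2 k)
  have "a (Suc (Suc k)) * cf_t a (Suc k) \<ge> 0"
    using partial_quotients_pos[of "Suc (Suc k)"] ge2 by simp
  then show ?case using ge2 by (simp add: cf_t_Suc_Suc)
qed (use partial_quotients_pos[of 1] in simp_all)

lemma cf_t_Suc_Suc_ge: "cf_t a (Suc k) + cf_t a k \<le> cf_t a (Suc (Suc k))"
  using mult_right_mono[OF partial_quotients_pos[of "Suc (Suc k)"], of "cf_t a (Suc k)"]
    cf_t_pos[of "Suc k"] by (simp add: cf_t_Suc_Suc)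

lemma cf_t_mono: "cf_t a k \<le> cf_t a (Suc k)"
  using cf_t_Suc_Suc_ge[of "k - 1"] cf_t_pos[of "k - 1"] partial_quotients_pos[of 1]
  by (cases k) simp_all

lemma cf_t_ge: "int k \<le> cf_t a k"
proof (induction k rule: induct_nat_012)
  case (ge2 k)
  then show ?case using cf_t_Suc_Suc_ge[of k] cf_t_pos[of k] by simp
qed (use partial_quotients_pos[of 1] in simp_all)

lemma cf_t_mult_cf_t_Suc_ge: "2 ^ k \<le> cf_t a k * cf_t a (Suc k)"
proof (induction k)
  case 0
  show ?case using cf_t_pos[of 1] by simp
next
  case (Suc k)
  have "2 * cf_t a k \<le> cf_t a (Suc (Suc k))"
    using cf_t_Suc_Suc_ge[of k] cf_t_mono[of k] by simp
  then have "cf_t a (Suc k) * (2 * cf_t a k) \<le> cf_t a (Suc k) * cf_t a (Suc (Suc k))"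
    using cf_t_pos[of "Suc k"] by (simp add: mult_left_mono)
  then show ?case using Suc by (simp add: algebra_simps)
qed

lemma cf_t_real_pos: "real_of_int (cf_t a k) > 0"
  using cf_t_pos[of k] by simp

lemma cf_conv_diff:
  "cf_conv a (Suc k) - cf_conv a k =
     (-1) ^ k / (real_of_int (cf_t a k) * real_of_int (cf_t a (Suc k)))"
proof -
  have "real_of_int (cf_s a (Suc k)) * real_of_int (cf_t a k)
        - real_of_int (cf_s a k) * real_of_int (cf_t a (Suc k)) = (-1) ^ k"
    using arg_cong[OF cf_det[of a k], of real_of_int] by simp
  then show ?thesis
    unfolding cf_conv_def using cf_t_real_pos[of k] cf_t_real_pos[of "Suc k"]
    by (simp add: field_simps)
qed

lemma cf_conv_diff_Suc_Suc:
  "cf_conv a (Suc (Suc k)) - cf_conv a k =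
     real_of_int (a (Suc (Suc k))) * (-1) ^ k
       / (real_of_int (cf_t a k) * real_of_int (cf_t a (Suc (Suc k))))"
proof -
  have "real_of_int (cf_s a (Suc (Suc k))) * real_of_int (cf_t a k)
        - real_of_int (cf_s a k) * real_of_int (cf_t a (Suc (Suc k)))
        = real_of_int (a (Suc (Suc k))) * (-1) ^ k"
    using arg_cong[OF cf_det_Suc_Suc[of a k], of real_of_int] by simp
  then show ?thesis
    unfolding cf_conv_def using cf_t_real_pos[of k] cf_t_real_pos[of "Suc (Suc k)"]
    by (simp add: field_simps)
qed

lemma abs_cf_conv_diff:
  "\<bar>cf_conv a (Suc k) - cf_conv a k\<bar> =
     1 / (real_of_int (cf_t a k) * real_of_int (cf_t a (Suc k)))"
  using cf_conv_diff[of k] cf_t_real_pos[of k] cf_t_real_pos[of "Suc k"] by (simp add: abs_mult)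

lemma cf_conv_convergent: "convergent (cf_conv a)"
proof -
  have "norm (cf_conv a (Suc k) - cf_conv a k) \<le> (1/2) ^ k" for k
  proof -
    have "(2::real) ^ k \<le> real_of_int (cf_t a k) * real_of_int (cf_t a (Suc k))"
      using cf_t_mult_cf_t_Suc_ge[of k]
      by (metis of_int_le_iff of_int_mult of_int_numeral of_int_power)
    then have "1 / (real_of_int (cf_t a k) * real_of_int (cf_t a (Suc k))) \<le> 1 / 2 ^ k"
      by (intro divide_left_mono) (use cf_t_real_pos[of k] cf_t_real_pos[of "Suc k"] in auto)
    then show ?thesis using abs_cf_conv_diff[of k] by (simp add: power_one_over)
  qed
  then have "summable (\<lambda>k. cf_conv a (Suc k) - cf_conv a k)"
    by (rule summable_comparison_test[OF exI, OF allI, OF impI]) (simp add: summable_geometric)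
  then have "convergent (\<lambda>n. cf_conv a 0 + (\<Sum>k<n. cf_conv a (Suc k) - cf_conv a k))"
    by (intro convergent_add convergent_const) (simp add: summable_iff_convergent)
  then show ?thesis by (simp add: sum_lessThan_telescope)
qed

text \<open>Even convergents increase and odd ones decrease, so the limit lies strictly between
  any two consecutive convergents.\<close>

lemma cf_conv_approx:
  assumes "cf_conv a \<longlonglongrightarrow> x"
  shows "0 < \<bar>x - cf_conv a k\<bar> \<and> \<bar>x - cf_conv a k\<bar> < \<bar>cf_conv a (Suc k) - cf_conv a k\<bar>"
proof -
  have sign: "cf_conv a (Suc (Suc k)) - cf_conv a k > 0 \<longleftrightarrow> even k" for k
    unfolding cf_conv_diff_Suc_Suc
    using partial_quotients_pos[of "Suc (Suc k)"] cf_t_real_pos[of k] cf_t_real_pos[of "Suc (Suc k)"]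
    by (auto simp: zero_less_divide_iff zero_less_mult_iff mult_less_0_iff minus_one_power_iff)
  have ne: "cf_conv a (Suc (Suc k)) \<noteq> cf_conv a k" for k
    using cf_conv_diff_Suc_Suc[of k] partial_quotients_pos[of "Suc (Suc k)"]
      cf_t_real_pos[of k] cf_t_real_pos[of "Suc (Suc k)"] by auto
  have even_step: "cf_conv a (2 * j) < cf_conv a (2 * Suc j)" for j
    using sign[of "2 * j"] by simp
  have odd_step: "cf_conv a (Suc (2 * Suc j)) < cf_conv a (Suc (2 * j))" for j
    using sign[of "Suc (2 * j)"] ne[of "Suc (2 * j)"] by auto
  have "(\<lambda>j. cf_conv a (2 * j)) \<longlonglongrightarrow> x"
    using LIMSEQ_subseq_LIMSEQ[OF assms, of "\<lambda>j. 2 * j"] by (simp add: strict_mono_def o_def)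
  moreover have "incseq (\<lambda>j. cf_conv a (2 * j))"
    using even_step by (intro incseq_SucI) (simp add: less_imp_le)
  ultimately have below: "cf_conv a (2 * j) < x" for j
    using even_step[of j] incseq_le[of _ x "Suc j"] by fastforce
  have "(\<lambda>j. cf_conv a (Suc (2 * j))) \<longlonglongrightarrow> x"
    using LIMSEQ_subseq_LIMSEQ[OF assms, of "\<lambda>j. Suc (2 * j)"] by (simp add: strict_mono_def o_def)
  moreover have "decseq (\<lambda>j. cf_conv a (Suc (2 * j)))"
    using odd_step by (intro decseq_SucI) (simp add: less_imp_le)
  ultimately have above: "x < cf_conv a (Suc (2 * j))" for j
    using odd_step[of j] decseq_ge[of _ x "Suc j"] by fastforce
  show ?thesis
  proof (cases "even k")
    case True
    then obtain j where "k = 2 * j" by blast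
    then show ?thesis using below[of j] above[of j] by auto
  next
    case False
    then obtain j where "k = Suc (2 * j)" by (metis oddE Suc_eq_plus1)
    then show ?thesis using below[of "Suc j"] above[of j] by auto
  qed
qed

lemma cf_limit_irrational:
  assumes "cf_conv a \<longlonglongrightarrow> x"
  shows "x \<notin> \<rat>"
proof
  assume "x \<in> \<rat>"
  then obtain p q where q: "q > 0" and x: "x = of_int p / of_int q" by (elim Rats_cases')
  define k where "k = nat q"
  define D where "D = p * cf_t a k - q * cf_s a k"
  let ?tk = "real_of_int (cf_t a k)" and ?tk' = "real_of_int (cf_t a (Suc k))"
  have pos: "?tk > 0" "?tk' > 0" using cf_t_real_pos by auto
  have "q < cf_t a (Suc k)"
    using cf_t_ge[of "Suc k"] q unfolding k_def by simp
  then have "real_of_int q / ?tk' < 1" using pos by simp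
  have D: "x - cf_conv a k = real_of_int D / (real_of_int q * ?tk)"
    unfolding x cf_conv_def D_def using q pos by (simp add: field_simps)
  have approx: "0 < \<bar>x - cf_conv a k\<bar>" "\<bar>x - cf_conv a k\<bar> < 1 / (?tk * ?tk')"
    using cf_conv_approx[OF assms, of k] abs_cf_conv_diff[of k] by auto
  then have "D \<noteq> 0" using D by auto
  have "\<bar>real_of_int D\<bar> / (real_of_int q * ?tk) < 1 / (?tk * ?tk')"
    using approx(2) D q pos by (simp add: abs_divide abs_mult)
  then have "\<bar>real_of_int D\<bar> < real_of_int q / ?tk'"
    using q pos by (simp add: field_simps)
  with \<open>real_of_int q / ?tk' < 1\<close> \<open>D \<noteq> 0\<close> show False by linarith
qed

end

section \<open>The example\<close>

definition period_cf :: "nat \<Rightarrow> nat \<Rightarrow> int" where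
  "period_cf L i =
     (if i mod L = L - 1 then (if L = 2 then 4 else 3) else if i mod L = 1 then 1 else 4)"

lemma mod_eq_minus_one_iff_Suc_mod_eq_0:
  fixes k L :: nat
  assumes "0 < L"
  shows "k mod L = L - 1 \<longleftrightarrow> Suc k mod L = 0"
  using mod_less_divisor[OF assms, of k] by (auto simp: mod_Suc)

lemma mult_add_mod_eq: "((c::int) * x + y) mod m = (c * (x mod m) + y mod m) mod m"
proof -
  have "(c * x + y) mod m = (c * x mod m + y mod m) mod m" by (rule mod_add_eq[symmetric])
  also have "c * x mod m = c * (x mod m) mod m" by (rule mod_mult_right_eq[symmetric])
  finally show ?thesis by (simp add: mod_add_left_eq)
qed

lemma Suc_mod_eq_1_iff:
  fixes k L :: nat
  assumes "1 < L"
  shows "Suc k mod L = 1 \<longleftrightarrow> k mod L = 0"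
  using assms by (auto simp: mod_Suc)

context
  fixes L :: nat
  assumes L: "2 \<le> L"
begin

lemma period_cf_pos: "period_cf L i \<ge> 1"
  unfolding period_cf_def by auto

lemma period_cf_range: "period_cf L i \<in> {1, 2, 3, 4}"
  unfolding period_cf_def by auto

lemma period_cf_periodic: "period_cf L (i + L) = period_cf L i"
  unfolding period_cf_def by simp

abbreviation den :: "nat \<Rightarrow> int" where
  "den \<equiv> cf_t (period_cf L)"

lemma den_pos: "den k > 0"
  using cf_t_pos[of "period_cf L", OF period_cf_pos] by (simp add: int_one_le_iff_zero_less)

lemma den_mod_4: "den k mod 4 = (if k mod L = L - 1 then 0 else 1)"
proof (induction k rule: induct_nat_012)
  case 0
  show ?case using L by simp
next
  case 1
  show ?case using L by (auto simp: period_cf_def)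
next
  case (ge2 k)
  let ?r = "Suc (Suc k) mod L"
  have "Suc k mod L = L - 1 \<longleftrightarrow> ?r = 0"
    using mod_eq_minus_one_iff_Suc_mod_eq_0[of L "Suc k"] L by simp
  moreover have "k mod L = L - 1 \<longleftrightarrow> ?r = 1"
    using mod_eq_minus_one_iff_Suc_mod_eq_0[of L k] Suc_mod_eq_1_iff[of L "Suc k"] L by simp
  moreover have "den (Suc (Suc k)) mod 4 =
      (period_cf L (Suc (Suc k)) * (den (Suc k) mod 4) + den k mod 4) mod 4"
    unfolding cf_t_Suc_Suc by (rule mult_add_mod_eq)
  ultimately have "den (Suc (Suc k)) mod 4 =
      (period_cf L (Suc (Suc k)) * (if ?r = 0 then 0 else 1) + (if ?r = 1 then 0 else 1)) mod 4"
    using ge2 by simp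
  moreover have "period_cf L (Suc (Suc k)) =
      (if ?r = L - 1 then (if L = 2 then 4 else 3) else if ?r = 1 then 1 else 4)"
    unfolding period_cf_def ..
  moreover have "?r = L - 1 \<Longrightarrow> ?r \<noteq> 0" using L by simp
  ultimately show ?case by (cases "?r = L - 1"; cases "?r = 1"; cases "L = 2") simp_all
qed

lemma even_den_iff: "even (den k) \<longleftrightarrow> k mod L = L - 1"
proof -
  have "den k mod 2 = den k mod 4 mod 2" by (simp add: mod_mod_cancel)
  then show ?thesis using den_mod_4[of k] by (simp add: even_iff_mod_2_eq_zero)
qed

lemma Jacobi_den_period_end:
  assumes "Suc j mod L = L - 1"
  shows "Jacobi (den (Suc j)) (den (Suc (Suc j))) = Jacobi (den (Suc j)) (den j)"
proof -
  have "j mod L \<noteq> L - 1"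
    using assms mod_eq_minus_one_iff_Suc_mod_eq_0[of L j] L by auto
  have "Suc (Suc j) mod L = 0"
    using assms mod_eq_minus_one_iff_Suc_mod_eq_0[of L "Suc j"] L by simp
  then have "period_cf L (Suc (Suc j)) = 4" using L by (simp add: period_cf_def)
  then have "den (Suc (Suc j)) = den j + int 4 * den (Suc j)" by (simp add: cf_t_Suc_Suc)
  moreover have "coprime (den (Suc j)) (den j)"
    using coprime_cf_t_Suc[of "period_cf L" j] by (simp add: coprime_commute)
  ultimately show ?thesis
    using Jacobi_add_multiple_left[OF den_pos den_pos, of "Suc j" j 4]
      den_mod_4[of "Suc j"] den_mod_4[of j] assms \<open>j mod L \<noteq> L - 1\<close> by simp
qed

lemma Jacobi_den_Suc:
  assumes "Suc k mod L \<noteq> L - 1"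
  shows "Jacobi (den k) (den (Suc k)) = 1"
  using assms
proof (induction k rule: less_induct)
  case (less k)
  have descent: "Jacobi (den (Suc (Suc j))) (den (Suc j)) = Jacobi (den j) (den (Suc j))" for j
    by (rule Jacobi_cong[OF cf_t_Suc_Suc_cong])
  show ?case
  proof (cases "k mod L = L - 1")
    case False
    then have "den k mod 4 = 1" "den (Suc k) mod 4 = 1" using den_mod_4 less.prems by simp_all
    then have "Jacobi (den k) (den (Suc k)) = Jacobi (den (Suc k)) (den k)"
      using Jacobi_swap_one_mod_4 den_pos coprime_cf_t_Suc by blast
    also have "\<dots> = 1"
    proof (cases k)
      case (Suc j)
      then show ?thesis using descent[of j] less.IH[of j] False by simp
    qed simp
    finally show ?thesis .
  next
    case True
    then obtain j where k: "k = Suc j" using L by (cases k) auto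
    have "j mod L \<noteq> L - 1"
      using True k mod_eq_minus_one_iff_Suc_mod_eq_0[of L j] L by auto
    have "Jacobi (den k) (den (Suc k)) = Jacobi (den k) (den j)"
      using Jacobi_den_period_end True k by simp
    also have "\<dots> = 1"
    proof (cases j)
      case (Suc i)
      then show ?thesis using descent[of i] less.IH[of i] k \<open>j mod L \<noteq> L - 1\<close> by simp
    qed simp
    finally show ?thesis .
  qed
qed

lemma Jacobi_cf_s_den:
  assumes "k mod L \<noteq> L - 1"
  shows "Jacobi (cf_s (period_cf L) k) (den k) = 1"
proof (cases k)
  case (Suc j)
  then have "Jacobi (cf_s (period_cf L) k) (den k) = Jacobi (den j) (den k)"
    using Jacobi_cf_s_Suc den_pos den_mod_4 assms by simp
  also have "\<dots> = 1" using Jacobi_den_Suc[of j] Suc assms by simp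
  finally show ?thesis .
qed simp

end

theorem theorem8:
  fixes L :: nat
  assumes "L \<ge> 2"
  shows "\<exists>(x::real) (a::nat \<Rightarrow> int).
           x \<notin> \<rat> \<and> is_cf_expansion x a \<and>
           (\<forall>i. a i \<in> {1, 2, 3, 4}) \<and>
           (\<exists>p>0. \<forall>i. a (i + p) = a i) \<and>
           (\<forall>k. jacobi_seq a k = (if k mod L = L - 1 then JStar else JVal 1))"
proof -
  define a where "a = period_cf L"
  have pos: "\<And>i. i \<ge> 1 \<Longrightarrow> a i \<ge> 1" using period_cf_pos[OF assms] by (simp add: a_def)
  obtain x where lim: "cf_conv a \<longlonglongrightarrow> x"
    using cf_conv_convergent[of a, OF pos] unfolding convergent_def by blast
  have "x \<notin> \<rat>" using cf_limit_irrational[of a, OF pos lim] .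
  moreover have "is_cf_expansion x a"
    using pos lim unfolding is_cf_expansion_def cf_conv_def[abs_def] by simp
  moreover have "\<forall>i. a i \<in> {1, 2, 3, 4}" using period_cf_range[OF assms] by (simp add: a_def)
  moreover have "\<exists>p>0. \<forall>i. a (i + p) = a i"
    using assms period_cf_periodic[OF assms] by (intro exI[of _ L]) (simp add: a_def)
  moreover have "jacobi_seq a k = (if k mod L = L - 1 then JStar else JVal 1)" for k
    using even_den_iff[OF assms, of k] Jacobi_cf_s_den[OF assms, of k]
    by (simp add: jacobi_seq_def jacobi_symb_def a_def)
  ultimately show ?thesis by blast
qed

end
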